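(* Let $X, Y \subseteq \omega$. If there exists an embedding $f : \mathcal{B}^X \hookrightarrow \mathcal{K}_2^Y$ then $X' \le_T Y$.
   Context: A partial combinatory algebra (pca) is a set $A$ with a partial binary application $\cdot$ containing distinct elements $\mathrm{s},\mathrm{k}$ with $\mathrm{k}ab\downarrow = a$, $\mathrm{s}ab\downarrow$, and $\mathrm{s}abc \simeq (ac)(bc)$. Given pcas $\mathcal{A},\mathcal{B}$, an embedding $\mathcal{A}\hookrightarrow\mathcal{B}$ is an injection $f$ such that whenever $aa'\downarrow$ in $\mathcal{A}$, $f(a)f(a')\downarrow = f(aa')$. Kleene's second model $\mathcal{K}_2$ is taken with carrier $\omega^\omega$ and application $g\cdot h = \Phi^{g\oplus h}_{g(0)}$, where $\Phi_e$ is the $e$-th Turing functional and $g\cdot h$ is defined iff the function on the right is total. Van Oosten's sequential computation model $\mathcal{B}$ is the same definition but with carrier the set of partial functions $\omega\rightharpoonup\omega$ (application always defined). For $X\subseteq\omega$, $\mathcal{K}_2^X$ is the sub-pca of $X$-computable total functions and $\mathcal{B}^X$ the sub-pca of partial $X$-computable functions. $X'$ denotes the halting set relativized to $X$. *)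

theory Defs
  imports Main "HOL-Library.Nat_Bijection"
begin

datatype recf =
    RZero | RSuc | RId | RFst | RSnd | ROrc
  | RComp recf recf
  | RPair recf recf
  | RPrec recf recf
  | RMn recf

text \<open>Big-step semantics: eval O p x y means program p on input x with oracle O halts
  with output y. A query to a point where the oracle is undefined diverges.\<close>

inductive eval :: "(nat \<Rightarrow> nat option) \<Rightarrow> recf \<Rightarrow> nat \<Rightarrow> nat \<Rightarrow> bool"
  for Or :: "nat \<Rightarrow> nat option" where
  ev_zero: "eval Or RZero x 0"
| ev_suc: "eval Or RSuc x (Suc x)"
| ev_id: "eval Or RId x x"
| ev_fst: "eval Or RFst x (fst (prod_decode x))"
| ev_snd: "eval Or RSnd x (snd (prod_decode x))"
| ev_orc: "Or x = Some y \<Longrightarrow> eval Or ROrc x y"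
| ev_comp: "eval Or g x y \<Longrightarrow> eval Or f y z \<Longrightarrow> eval Or (RComp f g) x z"
| ev_pair: "eval Or f x a \<Longrightarrow> eval Or g x b \<Longrightarrow> eval Or (RPair f g) x (prod_encode (a, b))"
| ev_prec0: "eval Or f x y \<Longrightarrow> eval Or (RPrec f g) (prod_encode (x, 0)) y"
| ev_precS: "eval Or (RPrec f g) (prod_encode (x, n)) y \<Longrightarrow>
             eval Or g (prod_encode (x, prod_encode (n, y))) z \<Longrightarrow>
             eval Or (RPrec f g) (prod_encode (x, Suc n)) z"
| ev_mn: "eval Or f (prod_encode (x, n)) 0 \<Longrightarrow>
          (\<forall>m<n. \<exists>k. k \<noteq> 0 \<and> eval Or f (prod_encode (x, m)) k) \<Longrightarrow>
          eval Or (RMn f) x n"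

lemma decode_aux1: "fst (prod_decode m) \<le> m"
  by (metis le_prod_encode_1 prod.collapse prod_decode_inverse)

lemma decode_aux2: "snd (prod_decode m) \<le> m"
  by (metis le_prod_encode_2 prod.collapse prod_decode_inverse)

lemma decode_aux3: "n mod 10 \<noteq> (0::nat) \<Longrightarrow> n div 10 < n"
  by (cases "n = 0") auto

lemma decode_aux4: "n mod 10 \<noteq> (0::nat) \<Longrightarrow> fst (prod_decode (n div 10)) < n"
  using decode_aux1[of "n div 10"] decode_aux3[of n] by linarith

lemma decode_aux5: "n mod 10 \<noteq> (0::nat) \<Longrightarrow> snd (prod_decode (n div 10)) < n"
  using decode_aux2[of "n div 10"] decode_aux3[of n] by linarith

function decode :: "nat \<Rightarrow> recf" where
  "decode n =
    (let t = n mod 10; m = n div 10 in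
     if t = 0 then RZero else if t = 1 then RSuc else if t = 2 then RId
     else if t = 3 then RFst else if t = 4 then RSnd else if t = 5 then ROrc
     else if t = 6 then RComp (decode (fst (prod_decode m))) (decode (snd (prod_decode m)))
     else if t = 7 then RPair (decode (fst (prod_decode m))) (decode (snd (prod_decode m)))
     else if t = 8 then RPrec (decode (fst (prod_decode m))) (decode (snd (prod_decode m)))
     else RMn (decode m))"
  by pat_completeness auto
termination
  by (relation "measure id")
     (simp_all add: decode_aux4 decode_aux5 decode_aux3)

definition Phi :: "(nat \<Rightarrow> nat option) \<Rightarrow> nat \<Rightarrow> nat \<Rightarrow> nat option" where
  "Phi Or e x = (if \<exists>y. eval Or (decode e) x y then Some (THE y. eval Or (decode e) x y) else None)"

definition join :: "(nat \<Rightarrow> 'a) \<Rightarrow> (nat \<Rightarrow> 'a) \<Rightarrow> nat \<Rightarrow> 'a" where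
  "join g h n = (if even n then g (n div 2) else h (n div 2))"

definition chi :: "nat set \<Rightarrow> nat \<Rightarrow> nat option" where
  "chi X n = Some (if n \<in> X then 1 else 0)"

definition K2_app :: "(nat \<Rightarrow> nat) \<Rightarrow> (nat \<Rightarrow> nat) \<Rightarrow> (nat \<Rightarrow> nat) option" where
  "K2_app g h =
    (if \<forall>x. Phi (\<lambda>n. Some (join g h n)) (g 0) x \<noteq> None
     then Some (\<lambda>x. the (Phi (\<lambda>n. Some (join g h n)) (g 0) x))
     else None)"

definition B_app :: "(nat \<Rightarrow> nat option) \<Rightarrow> (nat \<Rightarrow> nat option) \<Rightarrow> (nat \<Rightarrow> nat option)" where
  "B_app g h = (case g 0 of None \<Rightarrow> (\<lambda>_. None) | Some e \<Rightarrow> Phi (join g h) e)"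

definition K2_rel :: "nat set \<Rightarrow> (nat \<Rightarrow> nat) set" where
  "K2_rel Y = {f. \<exists>e. \<forall>x. Phi (chi Y) e x = Some (f x)}"

definition B_rel :: "nat set \<Rightarrow> (nat \<Rightarrow> nat option) set" where
  "B_rel X = {f. \<exists>e. Phi (chi X) e = f}"

definition embedding_B_K2 :: "nat set \<Rightarrow> nat set \<Rightarrow> ((nat \<Rightarrow> nat option) \<Rightarrow> (nat \<Rightarrow> nat)) \<Rightarrow> bool" where
  "embedding_B_K2 X Y f \<longleftrightarrow>
     f ` B_rel X \<subseteq> K2_rel Y \<and> inj_on f (B_rel X) \<and>
     (\<forall>a\<in>B_rel X. \<forall>a'\<in>B_rel X. K2_app (f a) (f a') = Some (f (B_app a a')))"

definition jump :: "nat set \<Rightarrow> nat set" where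
  "jump X = {e. Phi (chi X) e e \<noteq> None}"

definition turing_le :: "nat set \<Rightarrow> nat set \<Rightarrow> bool" where
  "turing_le A B \<longleftrightarrow> (\<exists>e. \<forall>x. Phi (chi B) e x = chi A x)"

end

theory Submission
  imports Defs
begin

(* B^X contains the constant functions e (the numerals), an element s with
   s . e = e+1, and an element c that stores the characteristic function of X together with
   a program running a universal machine, so that c . e is the constant function 0 if
   e \<in> X' and the empty function otherwise. An embedding f sends all of these to
   Y-computable functions, and application in K2 is effective on indices: for fixed g, a
   Y-index of f(g . h) is computable from a Y-index of f h. Starting from a Y-index of f 0
   and iterating, a computable function yields a Y-index of f(c . e) from e.
   By injectivity f 0 and f (empty function) differ at some point p, so e \<in> X' iff
   f(c . e) agrees with f 0 at p, which Y decides by running the universal program.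
   The universal program searches for a certificate of a halting computation: a coded
   list of computation steps, each justified by later ones, whose validity is primitive
   recursive in the oracle. *)

abbreviation pair :: "nat \<Rightarrow> nat \<Rightarrow> nat" where "pair a b \<equiv> prod_encode (a, b)"
abbreviation pfst :: "nat \<Rightarrow> nat" where "pfst z \<equiv> fst (prod_decode z)"
abbreviation psnd :: "nat \<Rightarrow> nat" where "psnd z \<equiv> snd (prod_decode z)"

abbreviation total_oracle :: "(nat \<Rightarrow> nat) \<Rightarrow> nat \<Rightarrow> nat option" where
  "total_oracle u \<equiv> \<lambda>n. Some (u n)"

lemma eval_deterministic: "eval Or p x y \<Longrightarrow> eval Or p x z \<Longrightarrow> y = z"
proof (induction arbitrary: z rule: eval.induct)
  case (ev_comp g x y f z z')
  from ev_comp.prems show ?case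
    by (cases rule: eval.cases) (use ev_comp.IH in blast)+
next
  case (ev_pair f x a g b z)
  from ev_pair.prems show ?case
    by (cases rule: eval.cases) (use ev_pair.IH in auto)
next
  case (ev_prec0 f x y g z)
  from ev_prec0.prems show ?case
    by (cases rule: eval.cases) (use ev_prec0.IH in auto)
next
  case (ev_precS f g x n y z z')
  from ev_precS.prems show ?case
    by (cases rule: eval.cases) (use ev_precS.IH in auto)
next
  case (ev_mn f x n)
  have z1: "eval Or f (pair x z) 0" and z2: "\<forall>m<z. \<exists>k. k \<noteq> 0 \<and> eval Or f (pair x m) k"
    using ev_mn.prems by (cases rule: eval.cases; auto)+
  show ?case
  proof (rule ccontr)
    assume "n \<noteq> z"
    then consider "n < z" | "z < n" by linarith
    then show False
    proof cases
      case 1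
      with z2 obtain k where "k \<noteq> 0" "eval Or f (pair x n) k" by auto
      with ev_mn.IH(1) show False by auto
    next
      case 2
      with ev_mn.IH(2) obtain k where "k \<noteq> 0" "\<forall>z'. eval Or f (pair x z) z' \<longrightarrow> k = z'"
        by blast
      with z1 show False by auto
    qed
  qed
qed (erule eval.cases; auto)+

lemma Phi_eq_Some_iff: "Phi Or e x = Some y \<longleftrightarrow> eval Or (decode e) x y"
  unfolding Phi_def using eval_deterministic by (auto intro: the_equality theI)

lemma Phi_eq_None_iff: "Phi Or e x = None \<longleftrightarrow> (\<forall>y. \<not> eval Or (decode e) x y)"
  unfolding Phi_def by auto

declare decode.simps[simp del]

fun encode :: "recf \<Rightarrow> nat" where
  "encode RZero = 0" | "encode RSuc = 1" | "encode RId = 2" | "encode RFst = 3"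
| "encode RSnd = 4" | "encode ROrc = 5"
| "encode (RComp f g) = 6 + 10 * pair (encode f) (encode g)"
| "encode (RPair f g) = 7 + 10 * pair (encode f) (encode g)"
| "encode (RPrec f g) = 8 + 10 * pair (encode f) (encode g)"
| "encode (RMn f) = 9 + 10 * encode f"

abbreviation sub1 :: "nat \<Rightarrow> nat" where "sub1 c \<equiv> pfst (c div 10)"
abbreviation sub2 :: "nat \<Rightarrow> nat" where "sub2 c \<equiv> psnd (c div 10)"

lemma decode_tag:
  "c mod 10 = 0 \<Longrightarrow> decode c = RZero"
  "c mod 10 = 1 \<Longrightarrow> decode c = RSuc"
  "c mod 10 = 2 \<Longrightarrow> decode c = RId"
  "c mod 10 = 3 \<Longrightarrow> decode c = RFst"
  "c mod 10 = 4 \<Longrightarrow> decode c = RSnd"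
  "c mod 10 = 5 \<Longrightarrow> decode c = ROrc"
  "c mod 10 = 6 \<Longrightarrow> decode c = RComp (decode (sub1 c)) (decode (sub2 c))"
  "c mod 10 = 7 \<Longrightarrow> decode c = RPair (decode (sub1 c)) (decode (sub2 c))"
  "c mod 10 = 8 \<Longrightarrow> decode c = RPrec (decode (sub1 c)) (decode (sub2 c))"
  "c mod 10 = 9 \<Longrightarrow> decode c = RMn (decode (c div 10))"
  by (subst decode.simps; simp add: Let_def)+

lemma decode_code [simp]:
  "decode (6 + 10 * pair a b) = RComp (decode a) (decode b)"
  "decode (7 + 10 * pair a b) = RPair (decode a) (decode b)"
  "decode (8 + 10 * pair a b) = RPrec (decode a) (decode b)"
  "decode (9 + 10 * a) = RMn (decode a)"
  by (simp_all add: decode_tag)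

lemma decode_encode [simp]: "decode (encode p) = p"
  by (induction p) (simp_all add: decode_tag)

lemma mod_10_cases:
  "(c::nat) mod 10 = 0 \<or> c mod 10 = 1 \<or> c mod 10 = 2 \<or> c mod 10 = 3 \<or> c mod 10 = 4
    \<or> c mod 10 = 5 \<or> c mod 10 = 6 \<or> c mod 10 = 7 \<or> c mod 10 = 8 \<or> c mod 10 = 9"
  by presburger

lemma decode_eqD:
  "decode c = RZero \<Longrightarrow> c mod 10 = 0"
  "decode c = RSuc \<Longrightarrow> c mod 10 = 1"
  "decode c = RId \<Longrightarrow> c mod 10 = 2"
  "decode c = RFst \<Longrightarrow> c mod 10 = 3"
  "decode c = RSnd \<Longrightarrow> c mod 10 = 4"
  "decode c = ROrc \<Longrightarrow> c mod 10 = 5"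
  "decode c = RComp f g \<Longrightarrow> c mod 10 = 6 \<and> f = decode (sub1 c) \<and> g = decode (sub2 c)"
  "decode c = RPair f g \<Longrightarrow> c mod 10 = 7 \<and> f = decode (sub1 c) \<and> g = decode (sub2 c)"
  "decode c = RPrec f g \<Longrightarrow> c mod 10 = 8 \<and> f = decode (sub1 c) \<and> g = decode (sub2 c)"
  "decode c = RMn f \<Longrightarrow> c mod 10 = 9 \<and> f = decode (c div 10)"
  using decode_tag[of c] mod_10_cases[of c] by auto

lemma Phi_encode_total: "(\<And>x. eval Or p x (h x)) \<Longrightarrow> Phi Or (encode p) = (\<lambda>x. Some (h x))"
  by (auto simp: fun_eq_iff Phi_eq_Some_iff)

lemma Phi_encode_empty: "(\<And>x y. \<not> eval Or p x y) \<Longrightarrow> Phi Or (encode p) = (\<lambda>x. None)"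
  by (auto simp: fun_eq_iff Phi_eq_None_iff)

subsection \<open>Functions computable uniformly in a total oracle\<close>

definition computable :: "((nat \<Rightarrow> nat) \<Rightarrow> nat \<Rightarrow> nat) \<Rightarrow> bool" where
  "computable h \<longleftrightarrow> (\<exists>p. \<forall>u x. eval (total_oracle u) p x (h u x))"

definition prog_of :: "((nat \<Rightarrow> nat) \<Rightarrow> nat \<Rightarrow> nat) \<Rightarrow> recf" where
  "prog_of h = (SOME p. \<forall>u x. eval (total_oracle u) p x (h u x))"

lemma eval_prog_of: "computable h \<Longrightarrow> eval (total_oracle u) (prog_of h) x (h u x)"
  unfolding computable_def prog_of_def by (rule someI2_ex) auto

lemma computableI: "(\<And>u x. eval (total_oracle u) p x (f u x)) \<Longrightarrow> computable f"
  unfolding computable_def by blast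

lemma computable_id: "computable (\<lambda>u x. x)"
  by (rule computableI[of RId]) (rule eval.ev_id)

lemma computable_comp: "computable f \<Longrightarrow> computable g \<Longrightarrow> computable (\<lambda>u x. f u (g u x))"
  unfolding computable_def by (metis eval.ev_comp)

lemma computable_zero: "computable (\<lambda>u x. 0)"
  by (rule computableI[of RZero]) (rule eval.ev_zero)

lemma computable_Suc: "computable f \<Longrightarrow> computable (\<lambda>u x. Suc (f u x))"
  using computable_comp[OF computableI[of RSuc "\<lambda>u x. Suc x"]] by (simp add: eval.ev_suc)

lemma computable_pfst: "computable f \<Longrightarrow> computable (\<lambda>u x. pfst (f u x))"
  using computable_comp[OF computableI[of RFst "\<lambda>u x. pfst x"]] by (simp add: eval.ev_fst)

lemma computable_psnd: "computable f \<Longrightarrow> computable (\<lambda>u x. psnd (f u x))"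
  using computable_comp[OF computableI[of RSnd "\<lambda>u x. psnd x"]] by (simp add: eval.ev_snd)

lemma computable_oracle: "computable f \<Longrightarrow> computable (\<lambda>u x. u (f u x))"
  using computable_comp[OF computableI[of ROrc "\<lambda>u x. u x"]] by (simp add: eval.ev_orc)

lemma computable_pair: "computable f \<Longrightarrow> computable g \<Longrightarrow> computable (\<lambda>u x. pair (f u x) (g u x))"
  unfolding computable_def by (metis eval.ev_pair)

lemma computable_const: "computable (\<lambda>u x. c)"
  by (induction c) (auto intro: computable_zero computable_Suc)

lemma computable_cong: assumes "computable f" "\<And>u x. f u x = g u x" shows "computable g"
proof -
  have "f = g" using assms(2) by (intro ext)
  then show ?thesis using assms(1) by simp
qed

primrec prec :: "((nat \<Rightarrow> nat) \<Rightarrow> nat \<Rightarrow> nat) \<Rightarrow> ((nat \<Rightarrow> nat) \<Rightarrow> nat \<Rightarrow> nat) \<Rightarrow>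
    (nat \<Rightarrow> nat) \<Rightarrow> nat \<Rightarrow> nat \<Rightarrow> nat" where
  "prec f g u x 0 = f u x"
| "prec f g u x (Suc n) = g u (pair x (pair n (prec f g u x n)))"

lemma computable_prec:
  assumes "computable f" "computable g"
  shows "computable (\<lambda>u z. prec f g u (pfst z) (psnd z))"
proof -
  obtain pf where pf: "\<And>u x. eval (total_oracle u) pf x (f u x)"
    using assms(1) unfolding computable_def by blast
  obtain pg where pg: "\<And>u x. eval (total_oracle u) pg x (g u x)"
    using assms(2) unfolding computable_def by blast
  have "eval (total_oracle u) (RPrec pf pg) (pair x n) (prec f g u x n)" for u x n
    by (induction n) (auto intro: eval.intros pf pg)
  then have "eval (total_oracle u) (RPrec pf pg) z (prec f g u (pfst z) (psnd z))" for u z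
    by (metis prod.collapse prod_decode_inverse)
  then show ?thesis unfolding computable_def by blast
qed

lemma computable_precI:
  assumes "computable f" "computable g" "computable a" "computable b"
    and "\<And>u x. h u x = prec f g u (a u x) (b u x)"
  shows "computable h"
  using computable_comp[OF computable_prec[OF assms(1,2)] computable_pair[OF assms(3,4)]]
  by (rule computable_cong) (simp add: assms(5))

lemma computable_add: assumes "computable f" "computable g" shows "computable (\<lambda>u x. f u x + g u x)"
proof (rule computable_precI[OF computable_id _ assms])
  show "computable (\<lambda>u w. Suc (psnd (psnd w)))" by (intro computable_Suc computable_psnd computable_id)
  have "prec (\<lambda>u x. x) (\<lambda>u w. Suc (psnd (psnd w))) u a n = a + n" for u a n by (induction n) auto
  then show "f u x + g u x = prec (\<lambda>u x. x) (\<lambda>u w. Suc (psnd (psnd w))) u (f u x) (g u x)" for u x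
    by simp
qed

lemma computable_pred: assumes "computable f" shows "computable (\<lambda>u x. f u x - 1)"
proof (rule computable_precI[OF computable_zero _ computable_zero assms])
  show "computable (\<lambda>u w. pfst (psnd w))" by (intro computable_pfst computable_psnd computable_id)
  have "prec (\<lambda>u x. 0) (\<lambda>u w. pfst (psnd w)) u a n = n - 1" for u a n by (induction n) auto
  then show "f u x - 1 = prec (\<lambda>u x. 0) (\<lambda>u w. pfst (psnd w)) u 0 (f u x)" for u x by simp
qed

lemma computable_diff: assumes "computable f" "computable g" shows "computable (\<lambda>u x. f u x - g u x)"
proof (rule computable_precI[OF computable_id _ assms])
  show "computable (\<lambda>u w. psnd (psnd w) - 1)" by (intro computable_pred computable_psnd computable_id)
  have "prec (\<lambda>u x. x) (\<lambda>u w. psnd (psnd w) - 1) u a n = a - n" for u a n by (induction n) auto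
  then show "f u x - g u x = prec (\<lambda>u x. x) (\<lambda>u w. psnd (psnd w) - 1) u (f u x) (g u x)" for u x
    by simp
qed

lemma computable_mult: assumes "computable f" "computable g" shows "computable (\<lambda>u x. f u x * g u x)"
proof (rule computable_precI[OF computable_zero _ assms])
  show "computable (\<lambda>u w. psnd (psnd w) + pfst w)"
    by (intro computable_add computable_pfst computable_psnd computable_id)
  have "prec (\<lambda>u x. 0) (\<lambda>u w. psnd (psnd w) + pfst w) u a n = a * n" for u a n by (induction n) auto
  then show "f u x * g u x = prec (\<lambda>u x. 0) (\<lambda>u w. psnd (psnd w) + pfst w) u (f u x) (g u x)" for u x
    by simp
qed

definition decidable :: "((nat \<Rightarrow> nat) \<Rightarrow> nat \<Rightarrow> bool) \<Rightarrow> bool" where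
  "decidable P \<longleftrightarrow> computable (\<lambda>u x. if P u x then 1 else 0)"

(* Primitive recursion on the 0/1 value of the test, started at the pair of both branches,
   returns the second component at 0 and the first component at 1. *)
lemma computable_if:
  assumes "decidable P" "computable f" "computable g"
  shows "computable (\<lambda>u x. if P u x then f u x else g u x)"
proof (rule computable_precI[OF _ _ computable_pair[OF assms(2,3)] assms(1)[unfolded decidable_def]])
  show "computable (\<lambda>u y. psnd y)" by (intro computable_psnd computable_id)
  show "computable (\<lambda>u w. pfst (pfst w))" by (intro computable_pfst computable_id)
qed simp

lemma decidable_cong: assumes "decidable P" "\<And>u x. P u x = Q u x" shows "decidable Q"
proof -
  have "P = Q" using assms(2) by (intro ext)
  then show ?thesis using assms(1) by simp
qed

lemma decidable_eq: assumes "computable f" "computable g" shows "decidable (\<lambda>u x. f u x = g u x)"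
  unfolding decidable_def
  by (rule computable_cong[OF computable_diff[OF computable_const
        computable_add[OF computable_diff[OF assms] computable_diff[OF assms(2,1)]]], of 1]) auto

lemma decidable_not: assumes "decidable P" shows "decidable (\<lambda>u x. \<not> P u x)"
  using assms unfolding decidable_def
  by (rule computable_cong[OF computable_diff[OF computable_const], of _ 1]) auto

lemma decidable_conj: assumes "decidable P" "decidable Q" shows "decidable (\<lambda>u x. P u x \<and> Q u x)"
  using computable_mult[OF assms[unfolded decidable_def]] unfolding decidable_def
  by (rule computable_cong) auto

lemma decidable_disj: assumes "decidable P" "decidable Q" shows "decidable (\<lambda>u x. P u x \<or> Q u x)"
  by (rule decidable_cong[OF decidable_not[OF decidable_conj[OF decidable_not[OF assms(1)]
        decidable_not[OF assms(2)]]]]) auto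

lemma decidable_imp: assumes "decidable P" "decidable Q" shows "decidable (\<lambda>u x. P u x \<longrightarrow> Q u x)"
  by (rule decidable_cong[OF decidable_disj[OF decidable_not[OF assms(1)] assms(2)]]) auto

lemma decidable_comp: "decidable P \<Longrightarrow> computable f \<Longrightarrow> decidable (\<lambda>u x. P u (f u x))"
  unfolding decidable_def by (drule computable_comp) auto

lemma decidable_bex:
  assumes P: "decidable (\<lambda>u z. P u (pfst z) (psnd z))" and n: "computable n"
  shows "decidable (\<lambda>u x. \<exists>i<n u x. P u x i)"
proof -
  let ?g = "\<lambda>u w. if P u (pfst w) (pfst (psnd w)) \<or> psnd (psnd w) = 1 then 1 else 0"
  have "decidable (\<lambda>u w. P u (pfst w) (pfst (psnd w)))"
    using decidable_comp[OF P computable_pair[OF computable_pfst[OF computable_id]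
          computable_pfst[OF computable_psnd[OF computable_id]]]] by simp
  then have g: "computable ?g"
    by (intro computable_if decidable_disj decidable_eq computable_const computable_psnd computable_id)
  have "prec (\<lambda>u x. 0) ?g u x m = (if \<exists>i<m. P u x i then 1 else 0)" for u x m
    by (induction m) (auto simp: less_Suc_eq)
  then show ?thesis unfolding decidable_def
    by (intro computable_precI[OF computable_zero g computable_id n]) simp
qed

lemma decidable_ball:
  assumes "decidable (\<lambda>u z. P u (pfst z) (psnd z))" and "computable n"
  shows "decidable (\<lambda>u x. \<forall>i<n u x. P u x i)"
  using decidable_not[OF decidable_bex[OF decidable_not[OF assms(1)] assms(2)]]
  by (rule decidable_cong) auto

lemma computable_mod: assumes "computable f" "computable g" shows "computable (\<lambda>u x. f u x mod g u x)"
proof -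
  let ?g = "\<lambda>u w. if Suc (psnd (psnd w)) = pfst w then 0 else Suc (psnd (psnd w))"
  have g: "computable ?g"
    by (intro computable_if decidable_eq computable_const computable_Suc computable_pfst
        computable_psnd computable_id)
  have "prec (\<lambda>u x. 0) ?g u d m = m mod d" for u d m
    by (induction m) (auto simp: mod_Suc)
  then show ?thesis
    by (intro computable_precI[OF computable_zero g assms(2) assms(1)]) simp
qed

lemma computable_div: assumes "computable f" "computable g" shows "computable (\<lambda>u x. f u x div g u x)"
proof -
  let ?g = "\<lambda>u w. if Suc (pfst (psnd w)) mod pfst w = 0 then Suc (psnd (psnd w)) else psnd (psnd w)"
  have g: "computable ?g"
    by (intro computable_if decidable_eq computable_mod computable_const computable_Suc
        computable_pfst computable_psnd computable_id)
  have "prec (\<lambda>u x. 0) ?g u d m = m div d" for u d m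
    by (induction m) (auto simp: div_Suc)
  then show ?thesis
    by (intro computable_precI[OF computable_zero g assms(2) assms(1)]) simp
qed

definition hd_code :: "nat \<Rightarrow> nat" where "hd_code L = pfst (L - 1)"
definition tl_code :: "nat \<Rightarrow> nat" where "tl_code L = psnd (L - 1)"

definition drop_code :: "nat \<Rightarrow> nat \<Rightarrow> nat" where "drop_code L i = (tl_code ^^ i) L"

(* Positions below L suffice since a list is shorter than its code (length_le_list_encode);
   the bound makes ex_code decidable. *)
definition ex_code :: "(nat \<Rightarrow> bool) \<Rightarrow> nat \<Rightarrow> bool" where
  "ex_code P L \<longleftrightarrow> (\<exists>j<L. drop_code L j \<noteq> 0 \<and> P (hd_code (drop_code L j)))"

lemma computable_hd_code: "computable f \<Longrightarrow> computable (\<lambda>u x. hd_code (f u x))"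
  unfolding hd_code_def by (intro computable_pfst computable_pred)

lemma computable_tl_code: "computable f \<Longrightarrow> computable (\<lambda>u x. tl_code (f u x))"
  unfolding tl_code_def by (intro computable_psnd computable_pred)

lemma computable_drop_code:
  assumes "computable f" "computable g"
  shows "computable (\<lambda>u x. drop_code (f u x) (g u x))"
proof -
  have g: "computable (\<lambda>u w. tl_code (psnd (psnd w)))"
    by (intro computable_tl_code computable_psnd computable_id)
  have "prec (\<lambda>u x. x) (\<lambda>u w. tl_code (psnd (psnd w))) u L i = drop_code L i" for u L i
    by (induction i) (simp_all add: drop_code_def)
  then show ?thesis by (intro computable_precI[OF computable_id g assms]) simp
qed

lemmas computable_intros = computable_id computable_const computable_Suc computable_pfst
  computable_psnd computable_oracle computable_pair computable_add computable_diff computable_mult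
  computable_mod computable_div computable_if computable_hd_code computable_tl_code
  computable_drop_code decidable_eq decidable_not decidable_conj
  decidable_disj decidable_imp decidable_bex decidable_ball

lemma prod_decode_0: "prod_decode 0 = (0, 0)"
proof -
  have "prod_encode (0, 0) = 0" by (simp add: prod_encode_def)
  then show ?thesis by (metis prod_encode_inverse)
qed

lemma tl_code_list_encode: "tl_code (list_encode l) = list_encode (tl l)"
  by (cases l) (auto simp: tl_code_def prod_decode_0)

lemma hd_code_list_encode: "l \<noteq> [] \<Longrightarrow> hd_code (list_encode l) = hd l"
  by (cases l) (auto simp: hd_code_def)

lemma drop_code_list_encode: "drop_code (list_encode l) i = list_encode (drop i l)"
  by (induction i) (simp_all add: drop_code_def tl_code_list_encode drop_Suc tl_drop)

lemma list_encode_eq_0_iff: "list_encode l = 0 \<longleftrightarrow> l = []"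
  by (cases l) auto

lemma length_le_list_encode: "length l \<le> list_encode l"
proof (induction l)
  case (Cons a l)
  then show ?case using le_prod_encode_2[of "list_encode l" a] by simp
qed simp

lemma ex_code_list_encode_iff: "ex_code P (list_encode l) \<longleftrightarrow> (\<exists>b\<in>set l. P b)"
proof
  assume "ex_code P (list_encode l)"
  then obtain j where "drop j l \<noteq> []" "P (hd (drop j l))"
    unfolding ex_code_def drop_code_list_encode list_encode_eq_0_iff
    by (auto simp: hd_code_list_encode)
  then show "\<exists>b\<in>set l. P b" by (metis hd_drop_conv_nth drop_eq_Nil not_le nth_mem)
next
  assume "\<exists>b\<in>set l. P b"
  then obtain j where j: "j < length l" "P (l ! j)" by (metis in_set_conv_nth)
  then have "j < list_encode l" using length_le_list_encode[of l] by linarith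
  with j show "ex_code P (list_encode l)"
    unfolding ex_code_def drop_code_list_encode list_encode_eq_0_iff
    by (auto simp: hd_code_list_encode hd_drop_conv_nth)
qed

subsection \<open>Certificates of computations and a universal program\<close>

(* A certificate is a list of entries "entry k x y m", each claiming that program decode k
   maps x to y; the auxiliary field m holds the intermediate value of a composition or the
   previous value of a primitive recursion. An entry is justified if it is an axiom or if
   entries further down the list witness the premises of its evaluation rule; H tests
   whether some later entry has a given property. *)

abbreviation entry :: "nat \<Rightarrow> nat \<Rightarrow> nat \<Rightarrow> nat \<Rightarrow> nat" where
  "entry k x y m \<equiv> pair k (pair x (pair y m))"

abbreviation ent_prog :: "nat \<Rightarrow> nat" where "ent_prog a \<equiv> pfst a"
abbreviation ent_in :: "nat \<Rightarrow> nat" where "ent_in a \<equiv> pfst (psnd a)"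
abbreviation ent_out :: "nat \<Rightarrow> nat" where "ent_out a \<equiv> pfst (psnd (psnd a))"
abbreviation ent_aux :: "nat \<Rightarrow> nat" where "ent_aux a \<equiv> psnd (psnd (psnd a))"

abbreviation has_entry :: "((nat \<Rightarrow> bool) \<Rightarrow> bool) \<Rightarrow> nat \<Rightarrow> nat \<Rightarrow> nat \<Rightarrow> bool" where
  "has_entry H k x y \<equiv> H (\<lambda>b. ent_prog b = k \<and> ent_in b = x \<and> ent_out b = y)"

definition justified :: "(nat \<Rightarrow> nat) \<Rightarrow> ((nat \<Rightarrow> bool) \<Rightarrow> bool) \<Rightarrow> nat \<Rightarrow> bool" where
  "justified u H a \<longleftrightarrow>
     (ent_prog a mod 10 = 0 \<and> ent_out a = 0)
   \<or> (ent_prog a mod 10 = 1 \<and> ent_out a = Suc (ent_in a))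
   \<or> (ent_prog a mod 10 = 2 \<and> ent_out a = ent_in a)
   \<or> (ent_prog a mod 10 = 3 \<and> ent_out a = pfst (ent_in a))
   \<or> (ent_prog a mod 10 = 4 \<and> ent_out a = psnd (ent_in a))
   \<or> (ent_prog a mod 10 = 5 \<and> ent_out a = u (ent_in a))
   \<or> (ent_prog a mod 10 = 6
       \<and> has_entry H (sub2 (ent_prog a)) (ent_in a) (ent_aux a)
       \<and> has_entry H (sub1 (ent_prog a)) (ent_aux a) (ent_out a))
   \<or> (ent_prog a mod 10 = 7
       \<and> has_entry H (sub1 (ent_prog a)) (ent_in a) (pfst (ent_out a))
       \<and> has_entry H (sub2 (ent_prog a)) (ent_in a) (psnd (ent_out a)))
   \<or> (ent_prog a mod 10 = 8 \<and> psnd (ent_in a) = 0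
       \<and> has_entry H (sub1 (ent_prog a)) (pfst (ent_in a)) (ent_out a))
   \<or> (ent_prog a mod 10 = 8 \<and> psnd (ent_in a) \<noteq> 0
       \<and> has_entry H (ent_prog a) (pair (pfst (ent_in a)) (psnd (ent_in a) - 1)) (ent_aux a)
       \<and> has_entry H (sub2 (ent_prog a))
           (pair (pfst (ent_in a)) (pair (psnd (ent_in a) - 1) (ent_aux a))) (ent_out a))
   \<or> (ent_prog a mod 10 = 9
       \<and> has_entry H (ent_prog a div 10) (pair (ent_in a) (ent_out a)) 0
       \<and> (\<forall>i<ent_out a. H (\<lambda>b. ent_prog b = ent_prog a div 10 \<and> ent_in b = pair (ent_in a) i
                               \<and> ent_out b \<noteq> 0)))"

fun valid_cert :: "(nat \<Rightarrow> nat) \<Rightarrow> nat list \<Rightarrow> bool" where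
  "valid_cert u [] = True"
| "valid_cert u (a # l) \<longleftrightarrow> justified u (\<lambda>P. \<exists>b\<in>set l. P b) a \<and> valid_cert u l"

definition valid_cert_code :: "(nat \<Rightarrow> nat) \<Rightarrow> nat \<Rightarrow> bool" where
  "valid_cert_code u L \<longleftrightarrow>
     (\<forall>i<L. drop_code L i \<noteq> 0 \<longrightarrow>
        justified u (\<lambda>P. ex_code P (tl_code (drop_code L i))) (hd_code (drop_code L i)))"

(* certifies u (pair (pair k x) (pair y L)): L codes a valid certificate whose first entry
   claims that decode k maps x to y. *)
definition certifies :: "(nat \<Rightarrow> nat) \<Rightarrow> nat \<Rightarrow> bool" where
  "certifies u z \<longleftrightarrow> valid_cert_code u (psnd (psnd z)) \<and> psnd (psnd z) \<noteq> 0
     \<and> ent_prog (hd_code (psnd (psnd z))) = pfst (pfst z)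
     \<and> ent_in (hd_code (psnd (psnd z))) = psnd (pfst z)
     \<and> ent_out (hd_code (psnd (psnd z))) = pfst (psnd z)"

lemma decidable_certifies: "decidable certifies"
  unfolding certifies_def valid_cert_code_def justified_def ex_code_def
  by (intro computable_intros)

lemma valid_cert_append: "valid_cert u l1 \<Longrightarrow> valid_cert u l2 \<Longrightarrow> valid_cert u (l1 @ l2)"
proof (induction l1)
  case (Cons a l1)
  have "justified u (\<lambda>P. \<exists>b\<in>set l1. P b) a" using Cons.prems by simp
  then have "justified u (\<lambda>P. \<exists>b\<in>set (l1 @ l2). P b) a"
    unfolding justified_def by (elim disjE conjE) auto
  then show ?case using Cons by simp
qed simp

lemma valid_cert_code_list_encode: "valid_cert_code u (list_encode l) \<longleftrightarrow> valid_cert u l"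
proof -
  have "valid_cert u l \<longleftrightarrow> (\<forall>i<length l. justified u (\<lambda>P. \<exists>b\<in>set (drop (Suc i) l). P b) (l ! i))"
    by (induction l) (auto simp: less_Suc_eq_0_disj)
  moreover have "drop i l \<noteq> [] \<longleftrightarrow> i < length l" "i < length l \<Longrightarrow> i < list_encode l"
    "i < length l \<Longrightarrow> hd (drop i l) = l ! i" "tl (drop i l) = drop (Suc i) l" for i
    using length_le_list_encode[of l] by (auto simp: hd_drop_conv_nth drop_Suc tl_drop)
  ultimately show ?thesis
    unfolding valid_cert_code_def drop_code_list_encode list_encode_eq_0_iff
    by (auto simp: hd_code_list_encode tl_code_list_encode ex_code_list_encode_iff)
qed

abbreviation entry_holds :: "(nat \<Rightarrow> nat) \<Rightarrow> nat \<Rightarrow> bool" where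
  "entry_holds u b \<equiv> eval (total_oracle u) (decode (ent_prog b)) (ent_in b) (ent_out b)"

lemma justified_sound:
  assumes "justified u (\<lambda>P. \<exists>b\<in>B. P b) a" and IH: "\<And>b. b \<in> B \<Longrightarrow> entry_holds u b"
  shows "entry_holds u a"
  using assms(1) unfolding justified_def
proof (elim disjE conjE)
  assume "ent_prog a mod 10 = 6"
    "\<exists>b\<in>B. ent_prog b = sub2 (ent_prog a) \<and> ent_in b = ent_in a \<and> ent_out b = ent_aux a"
    "\<exists>b\<in>B. ent_prog b = sub1 (ent_prog a) \<and> ent_in b = ent_aux a \<and> ent_out b = ent_out a"
  then have "eval (total_oracle u) (decode (sub2 (ent_prog a))) (ent_in a) (ent_aux a)"
    "eval (total_oracle u) (decode (sub1 (ent_prog a))) (ent_aux a) (ent_out a)"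
    using IH by fastforce+
  then show ?thesis using decode_tag(7) \<open>ent_prog a mod 10 = 6\<close> by (simp add: eval.ev_comp)
next
  assume "ent_prog a mod 10 = 7"
    "\<exists>b\<in>B. ent_prog b = sub1 (ent_prog a) \<and> ent_in b = ent_in a
      \<and> ent_out b = pfst (ent_out a)"
    "\<exists>b\<in>B. ent_prog b = sub2 (ent_prog a) \<and> ent_in b = ent_in a
      \<and> ent_out b = psnd (ent_out a)"
  then have "eval (total_oracle u) (decode (sub1 (ent_prog a))) (ent_in a) (pfst (ent_out a))"
    "eval (total_oracle u) (decode (sub2 (ent_prog a))) (ent_in a) (psnd (ent_out a))"
    using IH by fastforce+
  then have "eval (total_oracle u) (RPair (decode (sub1 (ent_prog a))) (decode (sub2 (ent_prog a))))
      (ent_in a) (pair (pfst (ent_out a)) (psnd (ent_out a)))"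
    by (rule eval.ev_pair)
  then show ?thesis using decode_tag(8) \<open>ent_prog a mod 10 = 7\<close> by simp
next
  assume "ent_prog a mod 10 = 8" "psnd (ent_in a) \<noteq> 0"
    "\<exists>b\<in>B. ent_prog b = ent_prog a
      \<and> ent_in b = pair (pfst (ent_in a)) (psnd (ent_in a) - 1) \<and> ent_out b = ent_aux a"
    "\<exists>b\<in>B. ent_prog b = sub2 (ent_prog a)
      \<and> ent_in b = pair (pfst (ent_in a)) (pair (psnd (ent_in a) - 1) (ent_aux a))
      \<and> ent_out b = ent_out a"
  then have "eval (total_oracle u) (decode (ent_prog a))
      (pair (pfst (ent_in a)) (Suc (psnd (ent_in a) - 1))) (ent_out a)"
    using IH decode_tag(9) by (metis eval.ev_precS)
  then show ?thesis using \<open>psnd (ent_in a) \<noteq> 0\<close> by simp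
next
  assume "ent_prog a mod 10 = 8" "psnd (ent_in a) = 0"
    "\<exists>b\<in>B. ent_prog b = sub1 (ent_prog a) \<and> ent_in b = pfst (ent_in a)
      \<and> ent_out b = ent_out a"
  then have "eval (total_oracle u) (decode (ent_prog a)) (pair (pfst (ent_in a)) 0) (ent_out a)"
    using IH decode_tag(9) by (metis eval.ev_prec0)
  then show ?thesis using \<open>psnd (ent_in a) = 0\<close> by (metis prod.collapse prod_decode_inverse)
next
  assume "ent_prog a mod 10 = 9"
    "\<exists>b\<in>B. ent_prog b = ent_prog a div 10 \<and> ent_in b = pair (ent_in a) (ent_out a)
      \<and> ent_out b = 0"
    "\<forall>i<ent_out a. \<exists>b\<in>B. ent_prog b = ent_prog a div 10 \<and> ent_in b = pair (ent_in a) i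
      \<and> ent_out b \<noteq> 0"
  then show ?thesis using IH by (metis decode_tag(10) eval.ev_mn)
qed (use IH in \<open>auto simp: decode_tag intro: eval.intros\<close>)

lemma valid_cert_sound: "valid_cert u l \<Longrightarrow> b \<in> set l \<Longrightarrow> entry_holds u b"
proof (induction l arbitrary: b)
  case (Cons a l)
  then show ?case using justified_sound[of u "set l" a] by auto
qed simp
definition has_cert :: "(nat \<Rightarrow> nat) \<Rightarrow> nat \<Rightarrow> nat \<Rightarrow> nat \<Rightarrow> bool" where
  "has_cert u k x y \<longleftrightarrow> (\<exists>m l. valid_cert u (entry k x y m # l))"

lemma has_certI:
  assumes "valid_cert u l1" "valid_cert u l2"
    and "justified u (\<lambda>P. \<exists>b\<in>set (l1 @ l2). P b) (entry k x y m)"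
  shows "has_cert u k x y"
proof -
  have "valid_cert u (entry k x y m # l1 @ l2)" using assms by (simp add: valid_cert_append)
  then show ?thesis unfolding has_cert_def by blast
qed

lemma valid_cert_nonzero_entries:
  assumes "\<forall>i<n. \<exists>v. v \<noteq> 0 \<and> has_cert u c (pair x i) v"
  shows "\<exists>l. valid_cert u l \<and> (\<forall>i<n. \<exists>b\<in>set l. ent_prog b = c \<and> ent_in b = pair x i \<and> ent_out b \<noteq> 0)"
  using assms
proof (induction n)
  case 0
  show ?case by (rule exI[of _ "[]"]) simp
next
  case (Suc n)
  then obtain l where l: "valid_cert u l"
    "\<forall>i<n. \<exists>b\<in>set l. ent_prog b = c \<and> ent_in b = pair x i \<and> ent_out b \<noteq> 0"
    by auto
  from Suc.prems obtain v m l' where v: "v \<noteq> 0" "valid_cert u (entry c (pair x n) v m # l')"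
    unfolding has_cert_def by auto
  let ?l = "l @ entry c (pair x n) v m # l'"
  have "valid_cert u ?l" using l(1) v(2) by (rule valid_cert_append)
  moreover have "\<forall>i<Suc n. \<exists>b\<in>set ?l. ent_prog b = c \<and> ent_in b = pair x i \<and> ent_out b \<noteq> 0"
    using l(2) v(1) by (auto simp: less_Suc_eq)
  ultimately show ?case by blast
qed

lemma has_cert_complete: "eval (total_oracle u) p x y \<Longrightarrow> decode k = p \<Longrightarrow> has_cert u k x y"
proof (induction arbitrary: k rule: eval.induct)
  case (ev_comp g x y f z)
  then have k: "k mod 10 = 6" "f = decode (sub1 k)" "g = decode (sub2 k)"
    using decode_eqD(7) by blast+
  obtain m1 l1 m2 l2 where "valid_cert u (entry (sub2 k) x y m1 # l1)"
    "valid_cert u (entry (sub1 k) y z m2 # l2)"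
    using ev_comp.IH k unfolding has_cert_def by blast
  then show ?case by (rule has_certI[where m = y]) (simp add: justified_def k(1))
next
  case (ev_pair f x a g b)
  then have k: "k mod 10 = 7" "f = decode (sub1 k)" "g = decode (sub2 k)"
    using decode_eqD(8) by blast+
  obtain m1 l1 m2 l2 where "valid_cert u (entry (sub1 k) x a m1 # l1)"
    "valid_cert u (entry (sub2 k) x b m2 # l2)"
    using ev_pair.IH k unfolding has_cert_def by blast
  then show ?case by (rule has_certI[where m = 0]) (simp add: justified_def k(1))
next
  case (ev_prec0 f x y g)
  then have k: "k mod 10 = 8" "f = decode (sub1 k)"
    using decode_eqD(9) by blast+
  obtain m l where "valid_cert u (entry (sub1 k) x y m # l)"
    using ev_prec0.IH k unfolding has_cert_def by blast
  then show ?case by (rule has_certI[of u _ "[]" _ _ _ 0]) (simp_all add: justified_def k(1))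
next
  case (ev_precS f g x n y z)
  then have k: "k mod 10 = 8" "g = decode (sub2 k)"
    using decode_eqD(9) by blast+
  obtain m1 l1 m2 l2 where "valid_cert u (entry k (pair x n) y m1 # l1)"
    "valid_cert u (entry (sub2 k) (pair x (pair n y)) z m2 # l2)"
    using ev_precS.IH ev_precS.prems k unfolding has_cert_def by blast
  then show ?case by (rule has_certI[where m = y]) (simp add: justified_def k(1))
next
  case (ev_mn f x n)
  then have k: "k mod 10 = 9" "f = decode (k div 10)"
    using decode_eqD(10) by blast+
  obtain m0 l0 where zero: "valid_cert u (entry (k div 10) (pair x n) 0 m0 # l0)"
    using ev_mn.IH(1) k unfolding has_cert_def by blast
  obtain l where l: "valid_cert u l"
    and nonzero: "\<forall>i<n. \<exists>b\<in>set l. ent_prog b = k div 10 \<and> ent_in b = pair x i \<and> ent_out b \<noteq> 0"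
    using valid_cert_nonzero_entries[of n u "k div 10" x] ev_mn.IH(2) k by blast
  show ?case
    by (rule has_certI[OF zero l, where m = 0]) (use nonzero in \<open>auto simp: justified_def k(1)\<close>)
qed (auto dest!: decode_eqD intro!: exI[of _ "[]"] simp: has_cert_def justified_def)

lemma certifies_sound:
  assumes "certifies u (pair (pair k x) w)"
  shows "eval (total_oracle u) (decode k) x (pfst w)"
proof -
  define l where "l = list_decode (psnd w)"
  have "psnd w = list_encode l" by (simp add: l_def)
  then have "valid_cert u l" "l \<noteq> []"
    and hd: "ent_prog (hd l) = k" "ent_in (hd l) = x" "ent_out (hd l) = pfst w"
    using assms hd_code_list_encode[of l] list_encode_eq_0_iff[of l]
    by (auto simp: certifies_def valid_cert_code_list_encode)
  then have "entry_holds u (hd l)"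
    by (intro valid_cert_sound) auto
  then show ?thesis unfolding hd .
qed

lemma certifies_complete:
  assumes "eval (total_oracle u) (decode k) x y"
  shows "\<exists>w. certifies u (pair (pair k x) w) \<and> pfst w = y"
proof -
  obtain m l where valid: "valid_cert u (entry k x y m # l)"
    using has_cert_complete[OF assms refl] unfolding has_cert_def by blast
  define L where "L = list_encode (entry k x y m # l)"
  have "valid_cert_code u L"
    using valid unfolding L_def valid_cert_code_list_encode .
  moreover have "L \<noteq> 0" "hd_code L = entry k x y m"
    by (simp_all add: L_def hd_code_def)
  ultimately have "certifies u (pair (pair k x) (pair y L))"
    unfolding certifies_def by simp
  then show ?thesis by force
qed

definition check_prog :: recf where
  "check_prog = prog_of (\<lambda>u z. if certifies u z then 0 else 1)"

lemma eval_check_prog: "eval (total_oracle u) check_prog z (if certifies u z then 0 else 1)"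
  unfolding check_prog_def
  by (intro eval_prog_of computable_if decidable_certifies computable_const)

lemma eval_search_certificate_iff:
  "eval (total_oracle u) (RMn check_prog) (pair k x) w \<longleftrightarrow>
     certifies u (pair (pair k x) w) \<and> (\<forall>v<w. \<not> certifies u (pair (pair k x) v))"
proof
  assume "eval (total_oracle u) (RMn check_prog) (pair k x) w"
  then have zero: "eval (total_oracle u) check_prog (pair (pair k x) w) 0"
    and nonzero: "\<forall>v<w. \<exists>n. n \<noteq> 0 \<and> eval (total_oracle u) check_prog (pair (pair k x) v) n"
    by (cases rule: eval.cases; auto)+
  have "\<not> certifies u (pair (pair k x) v)" if "v < w" for v
  proof -
    obtain n where "n \<noteq> 0" "eval (total_oracle u) check_prog (pair (pair k x) v) n"
      using nonzero \<open>v < w\<close> by blast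
    then show ?thesis using eval_deterministic[OF eval_check_prog] by fastforce
  qed
  moreover have "certifies u (pair (pair k x) w)"
    using eval_deterministic[OF eval_check_prog zero] by (simp split: if_splits)
  ultimately show "certifies u (pair (pair k x) w) \<and> (\<forall>v<w. \<not> certifies u (pair (pair k x) v))"
    by blast
next
  assume A: "certifies u (pair (pair k x) w) \<and> (\<forall>v<w. \<not> certifies u (pair (pair k x) v))"
  show "eval (total_oracle u) (RMn check_prog) (pair k x) w"
  proof (rule eval.ev_mn)
    show "eval (total_oracle u) check_prog (pair (pair k x) w) 0"
      using eval_check_prog[of u "pair (pair k x) w"] A by simp
    show "\<forall>v<w. \<exists>n. n \<noteq> 0 \<and> eval (total_oracle u) check_prog (pair (pair k x) v) n"
    proof (intro allI impI)
      fix v assume "v < w"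
      then have "eval (total_oracle u) check_prog (pair (pair k x) v) 1"
        using eval_check_prog[of u "pair (pair k x) v"] A by simp
      then show "\<exists>n. n \<noteq> 0 \<and> eval (total_oracle u) check_prog (pair (pair k x) v) n" by blast
    qed
  qed
qed

definition universal :: recf where "universal = RComp RFst (RMn check_prog)"

lemma eval_universal_iff:
  "eval (total_oracle u) universal (pair k x) y \<longleftrightarrow> eval (total_oracle u) (decode k) x y"
proof
  assume "eval (total_oracle u) universal (pair k x) y"
  then obtain w where "eval (total_oracle u) (RMn check_prog) (pair k x) w" "y = pfst w"
    unfolding universal_def by (auto elim!: eval.cases[of _ "RComp _ _"] eval.cases[of _ RFst])
  then show "eval (total_oracle u) (decode k) x y"
    using eval_search_certificate_iff certifies_sound by blast
next
  assume E: "eval (total_oracle u) (decode k) x y"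
  then have ex: "\<exists>w. certifies u (pair (pair k x) w)" using certifies_complete by blast
  define w where "w = (LEAST w. certifies u (pair (pair k x) w))"
  have cert: "certifies u (pair (pair k x) w)" "\<forall>v<w. \<not> certifies u (pair (pair k x) v)"
    unfolding w_def using LeastI_ex[OF ex] not_less_Least by auto
  then have "eval (total_oracle u) universal (pair k x) (pfst w)"
    unfolding universal_def using eval_search_certificate_iff
    by (blast intro: eval.ev_comp eval.ev_fst)
  moreover have "y = pfst w"
    using eval_deterministic[OF E certifies_sound[OF cert(1)]] .
  ultimately show "eval (total_oracle u) universal (pair k x) y" by simp
qed

subsection \<open>Substituting a program for the oracle\<close>

fun subst_oracle :: "recf \<Rightarrow> recf \<Rightarrow> recf" where
  "subst_oracle ROrc q = q"
| "subst_oracle (RComp f g) q = RComp (subst_oracle f q) (subst_oracle g q)"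
| "subst_oracle (RPair f g) q = RPair (subst_oracle f q) (subst_oracle g q)"
| "subst_oracle (RPrec f g) q = RPrec (subst_oracle f q) (subst_oracle g q)"
| "subst_oracle (RMn f) q = RMn (subst_oracle f q)"
| "subst_oracle p q = p"

lemma eval_subst_oracleI:
  assumes "\<And>n v. Or' n = Some v \<Longrightarrow> eval Or q n v"
  shows "eval Or' p x y \<Longrightarrow> eval Or (subst_oracle p q) x y"
proof (induction rule: eval.induct)
  case (ev_mn f x n)
  then show ?case by (auto intro!: eval.ev_mn)
qed (auto intro: eval.intros assms)

lemma eval_subst_oracleD:
  assumes "\<And>n v. eval Or q n v \<Longrightarrow> Or' n = Some v"
  shows "eval Or r x y \<Longrightarrow> r = subst_oracle p q \<Longrightarrow> eval Or' p x y"
proof (induction arbitrary: p rule: eval.induct)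
  case (ev_precS f g x n y z)
  show ?case
  proof (cases p)
    case (RPrec f' g')
    with ev_precS.prems have "f = subst_oracle f' q" "g = subst_oracle g' q" by auto
    then have "eval Or' (RPrec f' g') (pair x n) y" "eval Or' g' (pair x (pair n y)) z"
      using ev_precS.IH[of "RPrec f' g'"] ev_precS.IH(2)[of g'] by simp_all
    then show ?thesis unfolding RPrec by (rule eval.ev_precS)
  qed (use ev_precS in \<open>auto intro: eval.intros eval.ev_orc[OF assms]\<close>)
next
  case (ev_mn f x n)
  have "eval Or (RMn f) x n" using ev_mn.hyps ev_mn.IH(2) by (intro eval.ev_mn) auto
  show ?case
  proof (cases p)
    case (RMn f')
    with ev_mn.prems have f: "f = subst_oracle f' q" by simp
    show ?thesis unfolding RMn
    proof (rule eval.ev_mn)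
      show "eval Or' f' (pair x n) 0" using ev_mn.IH(1) f by simp
      show "\<forall>m<n. \<exists>k. k \<noteq> 0 \<and> eval Or' f' (pair x m) k" using ev_mn.IH(2) f by blast
    qed
  qed (use \<open>eval Or (RMn f) x n\<close> ev_mn.prems in \<open>auto intro: eval.ev_orc[OF assms]\<close>)
qed (auto intro: eval.intros eval.ev_orc[OF assms] elim!: subst_oracle.elims[OF sym])

lemma eval_subst_oracle_iff:
  assumes "\<And>n v. eval Or q n v \<longleftrightarrow> Or' n = Some v"
  shows "eval Or (subst_oracle p q) x y \<longleftrightarrow> eval Or' p x y"
  using eval_subst_oracleD[of Or q Or'] eval_subst_oracleI[of Or' Or q] assms by blast

fun encode_subst_oracle :: "recf \<Rightarrow> nat \<Rightarrow> nat" where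
  "encode_subst_oracle ROrc c = c"
| "encode_subst_oracle (RComp f g) c = 6 + 10 * pair (encode_subst_oracle f c) (encode_subst_oracle g c)"
| "encode_subst_oracle (RPair f g) c = 7 + 10 * pair (encode_subst_oracle f c) (encode_subst_oracle g c)"
| "encode_subst_oracle (RPrec f g) c = 8 + 10 * pair (encode_subst_oracle f c) (encode_subst_oracle g c)"
| "encode_subst_oracle (RMn f) c = 9 + 10 * encode_subst_oracle f c"
| "encode_subst_oracle p c = encode p"

lemma decode_encode_subst_oracle: "decode (encode_subst_oracle p c) = subst_oracle p (decode c)"
  by (induction p) (simp_all del: encode.simps)

lemma computable_encode_subst_oracle:
  "computable g \<Longrightarrow> computable (\<lambda>u x. encode_subst_oracle p (g u x))"
  by (induction p) (auto intro!: computable_add computable_mult computable_pair computable_const)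

primrec const_prog :: "nat \<Rightarrow> recf" where
  "const_prog 0 = RZero"
| "const_prog (Suc c) = RComp RSuc (const_prog c)"

lemma eval_const_prog: "eval Or (const_prog c) x c"
  by (induction c) (auto intro: eval.intros)

definition select_prog :: recf where
  "select_prog = prog_of (\<lambda>u z. if even (pfst z) then pfst (psnd z) else psnd (psnd z))"

definition half_prog :: recf where "half_prog = prog_of (\<lambda>u x. x div 2)"

lemma eval_select_prog:
  "eval (total_oracle u) select_prog z (if even (pfst z) then pfst (psnd z) else psnd (psnd z))"
  unfolding select_prog_def even_iff_mod_2_eq_zero by (intro eval_prog_of computable_intros)

lemma eval_half_prog: "eval (total_oracle u) half_prog x (x div 2)"
  unfolding half_prog_def by (intro eval_prog_of computable_intros)

definition join_prog :: "recf \<Rightarrow> recf \<Rightarrow> recf" where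
  "join_prog P Q = RComp select_prog (RPair RId (RPair (RComp P half_prog) (RComp Q half_prog)))"

lemma eval_join_prog_iff:
  assumes "\<And>x. eval (total_oracle u) P x (g x)" and "\<And>x. eval (total_oracle u) Q x (h x)"
  shows "eval (total_oracle u) (join_prog P Q) n v \<longleftrightarrow> v = join g h n"
proof -
  have "eval (total_oracle u) (RPair RId (RPair (RComp P half_prog) (RComp Q half_prog))) n
      (pair n (pair (g (n div 2)) (h (n div 2))))"
    using assms eval_half_prog by (intro eval.ev_pair eval.ev_id eval.ev_comp)
  then have "eval (total_oracle u) (join_prog P Q) n (if even n then g (n div 2) else h (n div 2))"
    unfolding join_prog_def using eval.ev_comp[OF _ eval_select_prog] by fastforce
  then show ?thesis unfolding join_def using eval_deterministic by blast
qed

definition join_prog_code :: "recf \<Rightarrow> nat \<Rightarrow> nat" where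
  "join_prog_code P c = 6 + 10 * pair (encode select_prog) (7 + 10 * pair (encode RId)
      (7 + 10 * pair (encode (RComp P half_prog)) (6 + 10 * pair c (encode half_prog))))"

lemma decode_join_prog_code: "decode (join_prog_code P c) = join_prog P (decode c)"
  by (simp add: join_prog_code_def join_prog_def del: encode.simps)

lemma computable_join_prog_code: "computable g \<Longrightarrow> computable (\<lambda>u x. join_prog_code P (g u x))"
  unfolding join_prog_code_def by (intro computable_intros)

definition char_fun :: "nat set \<Rightarrow> nat \<Rightarrow> nat" where
  "char_fun X n = (if n \<in> X then 1 else 0)"

lemma chi_eq_total_oracle: "chi X = total_oracle (char_fun X)"
  by (auto simp: chi_def char_fun_def)

lemma prog_of_in_B_rel:
  "computable h \<Longrightarrow> (\<lambda>x. Some (h (char_fun X) x)) \<in> B_rel X"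
  unfolding B_rel_def chi_eq_total_oracle using Phi_encode_total[OF eval_prog_of] by blast

definition const_fn :: "nat \<Rightarrow> nat \<Rightarrow> nat option" where "const_fn e = (\<lambda>x. Some e)"

lemma const_fn_in_B_rel: "const_fn e \<in> B_rel X"
  unfolding const_fn_def by (rule prog_of_in_B_rel[OF computable_const])

lemma empty_fn_in_B_rel: "(\<lambda>x. None) \<in> B_rel X"
proof -
  have "\<not> eval Or (RMn RSuc) x y" for Or x y
    by (auto elim!: eval.cases[of _ "RMn _"] eval.cases[of _ RSuc])
  then show ?thesis unfolding B_rel_def using Phi_encode_empty by blast
qed

definition succ_prog :: recf where "succ_prog = prog_of (\<lambda>u x. Suc (u 1))"

definition succ_elem :: "nat \<Rightarrow> nat option" where "succ_elem = const_fn (encode succ_prog)"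

lemma B_app_succ_elem: "B_app succ_elem (const_fn e) = const_fn (Suc e)"
proof -
  define w :: "nat \<Rightarrow> nat" where "w n = (if even n then encode succ_prog else e)" for n
  have "join succ_elem (const_fn e) = total_oracle w"
    by (auto simp: join_def succ_elem_def const_fn_def w_def)
  moreover have "eval (total_oracle w) succ_prog x (Suc (w 1))" for x
    unfolding succ_prog_def by (intro eval_prog_of computable_intros)
  moreover have "w 1 = e" by (simp add: w_def)
  ultimately show ?thesis
    by (simp add: B_app_def succ_elem_def const_fn_def Phi_encode_total)
qed

definition arg_prog :: recf where "arg_prog = prog_of (\<lambda>u x. u 1)"
definition stored_oracle_prog :: recf where "stored_oracle_prog = prog_of (\<lambda>u x. u (2 * x + 2))"

lemma eval_arg_prog_iff: "eval (total_oracle u) arg_prog x v \<longleftrightarrow> v = u 1"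
proof -
  have "eval (total_oracle u) arg_prog x (u 1)"
    unfolding arg_prog_def by (intro eval_prog_of computable_intros)
  then show ?thesis using eval_deterministic by blast
qed

(* Applied to a numeral e, jump_elem X runs the universal program on (e, e) relative to the
   oracle it stores, which sits at the positions 2q + 2 of the join of jump_elem X and e. *)
definition jump_prog :: recf where
  "jump_prog = RComp RZero (RComp (subst_oracle universal stored_oracle_prog) (RPair arg_prog arg_prog))"

lemma eval_jump_prog_iff:
  "eval (total_oracle u) jump_prog x y \<longleftrightarrow>
     y = 0 \<and> (\<exists>v. eval (total_oracle (\<lambda>q. u (2 * q + 2))) universal (pair (u 1) (u 1)) v)"
proof -
  have stored: "eval (total_oracle u) stored_oracle_prog n (u (2 * n + 2))" for n
    unfolding stored_oracle_prog_def by (intro eval_prog_of computable_intros)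
  then have "eval (total_oracle u) stored_oracle_prog n v \<longleftrightarrow> total_oracle (\<lambda>q. u (2 * q + 2)) n = Some v"
    for n v
    by (auto dest: eval_deterministic[OF stored])
  then have universal: "eval (total_oracle u) (subst_oracle universal stored_oracle_prog) z v \<longleftrightarrow>
      eval (total_oracle (\<lambda>q. u (2 * q + 2))) universal z v" for z v
    by (rule eval_subst_oracle_iff)
  have args: "eval (total_oracle u) (RPair arg_prog arg_prog) x z \<longleftrightarrow> z = pair (u 1) (u 1)" for z
    by (auto simp: eval_arg_prog_iff intro: eval.ev_pair elim: eval.cases[of _ "RPair _ _"])
  show ?thesis
  proof
    assume "eval (total_oracle u) jump_prog x y"
    then show "y = 0 \<and> (\<exists>v. eval (total_oracle (\<lambda>q. u (2 * q + 2))) universal (pair (u 1) (u 1)) v)"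
      unfolding jump_prog_def
      by (auto simp only: universal args elim!: eval.cases[of _ "RComp _ _"] eval.cases[of _ RZero])
  next
    assume "y = 0 \<and> (\<exists>v. eval (total_oracle (\<lambda>q. u (2 * q + 2))) universal (pair (u 1) (u 1)) v)"
    then show "eval (total_oracle u) jump_prog x y"
      unfolding jump_prog_def using args universal by (blast intro: eval.ev_comp eval.ev_zero)
  qed
qed

definition jump_elem :: "nat set \<Rightarrow> nat \<Rightarrow> nat option" where
  "jump_elem X = (\<lambda>n. Some (if n = 0 then encode jump_prog else char_fun X (n - 1)))"

lemma jump_elem_in_B_rel: "jump_elem X \<in> B_rel X"
proof -
  have "computable (\<lambda>u x. if x = 0 then encode jump_prog else u (x - 1))"
    by (intro computable_intros)
  from prog_of_in_B_rel[OF this, of X] show ?thesis unfolding jump_elem_def .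
qed

lemma jump_iff_eval: "e \<in> jump X \<longleftrightarrow> (\<exists>v. eval (chi X) (decode e) e v)"
  unfolding jump_def using Phi_eq_None_iff[of "chi X" e e] by auto

lemma B_app_jump_elem:
  "B_app (jump_elem X) (const_fn e) = (if e \<in> jump X then const_fn 0 else (\<lambda>x. None))"
proof -
  define w where
    "w n = (if even n then (if n div 2 = 0 then encode jump_prog else char_fun X (n div 2 - 1)) else e)"
    for n
  have join: "join (jump_elem X) (const_fn e) = total_oracle w"
    by (auto simp: join_def jump_elem_def const_fn_def w_def)
  have arg: "w 1 = e" and stored: "total_oracle (\<lambda>q. w (2 * q + 2)) = total_oracle (char_fun X)"
    by (auto simp: w_def char_fun_def)
  have "eval (total_oracle w) jump_prog x y \<longleftrightarrow> y = 0 \<and> e \<in> jump X" for x y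
    unfolding eval_jump_prog_iff arg stored eval_universal_iff jump_iff_eval chi_eq_total_oracle ..
  with join show ?thesis
    by (auto simp: B_app_def jump_elem_def const_fn_def intro!: Phi_encode_total Phi_encode_empty)
qed

lemma embedding_B_K2_index:
  assumes "embedding_B_K2 X Y f" "a \<in> B_rel X"
  obtains i where "\<And>x. eval (total_oracle (char_fun Y)) (decode i) x (f a x)"
  using assms unfolding embedding_B_K2_def K2_rel_def Phi_eq_Some_iff chi_eq_total_oracle by blast

lemma embedding_B_K2_app:
  assumes "embedding_B_K2 X Y f" "a \<in> B_rel X" "a' \<in> B_rel X"
  shows "eval (total_oracle (join (f a) (f a'))) (decode (f a 0)) x (f (B_app a a') x)"
proof -
  have "K2_app (f a) (f a') = Some (f (B_app a a'))"
    using assms unfolding embedding_B_K2_def by blast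
  then have defined: "\<forall>x. Phi (total_oracle (join (f a) (f a'))) (f a 0) x \<noteq> None"
    and result: "(\<lambda>x. the (Phi (total_oracle (join (f a) (f a'))) (f a 0) x)) = f (B_app a a')"
    unfolding K2_app_def by (auto split: if_splits)
  have "Phi (total_oracle (join (f a) (f a'))) (f a 0) x = Some (f (B_app a a') x)"
    using defined[rule_format, of x] fun_cong[OF result, of x] by auto
  then show ?thesis unfolding Phi_eq_Some_iff .
qed

definition app_code :: "recf \<Rightarrow> nat \<Rightarrow> nat \<Rightarrow> nat" where
  "app_code P e k = encode_subst_oracle (decode e) (join_prog_code P k)"

lemma eval_app_code:
  assumes "\<And>x. eval (total_oracle u) P x (g x)" "\<And>x. eval (total_oracle u) (decode k) x (h x)"
    and "\<And>x. eval (total_oracle (join g h)) (decode (g 0)) x (r x)"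
  shows "eval (total_oracle u) (decode (app_code P (g 0) k)) x (r x)"
proof -
  have "eval (total_oracle u) (join_prog P (decode k)) n v \<longleftrightarrow> total_oracle (join g h) n = Some v"
    for n v
    using eval_join_prog_iff[OF assms(1,2)] by auto
  then have "eval (total_oracle u) (subst_oracle (decode (g 0)) (join_prog P (decode k))) x y
      \<longleftrightarrow> eval (total_oracle (join g h)) (decode (g 0)) x y" for y
    by (rule eval_subst_oracle_iff)
  then show ?thesis
    unfolding app_code_def decode_encode_subst_oracle decode_join_prog_code using assms(3) by blast
qed

lemma computable_app_code: "computable g \<Longrightarrow> computable (\<lambda>u x. app_code P e (g u x))"
  unfolding app_code_def by (intro computable_encode_subst_oracle computable_join_prog_code)

lemma embedding_B_K2_jump_indices:
  assumes emb: "embedding_B_K2 X Y f"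
  obtains k where "computable (\<lambda>u e. k e)"
    and "\<And>e x. eval (total_oracle (char_fun Y)) (decode (k e)) x (f (B_app (jump_elem X) (const_fn e)) x)"
proof -
  let ?Y = "total_oracle (char_fun Y)"
  obtain s where s: "\<And>x. eval ?Y (decode s) x (f succ_elem x)"
    using embedding_B_K2_index[OF emb const_fn_in_B_rel] unfolding succ_elem_def by blast
  obtain z where z: "\<And>x. eval ?Y (decode z) x (f (const_fn 0) x)"
    using embedding_B_K2_index[OF emb const_fn_in_B_rel] by blast
  obtain c where c: "\<And>x. eval ?Y (decode c) x (f (jump_elem X) x)"
    using embedding_B_K2_index[OF emb jump_elem_in_B_rel] by blast
  define num where "num = rec_nat z (\<lambda>_. app_code (decode s) (f succ_elem 0))"
  have num: "eval ?Y (decode (num e)) x (f (const_fn e) x)" for e x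
  proof (induction e arbitrary: x)
    case 0
    show ?case using z by (simp add: num_def)
  next
    case (Suc e)
    have "succ_elem \<in> B_rel X" unfolding succ_elem_def by (rule const_fn_in_B_rel)
    from embedding_B_K2_app[OF emb this const_fn_in_B_rel]
    show ?case using eval_app_code[OF s Suc.IH] by (simp add: num_def B_app_succ_elem)
  qed
  have "computable (\<lambda>u e. num e)"
  proof (rule computable_precI[OF computable_const _ computable_const computable_id])
    show "computable (\<lambda>u w. app_code (decode s) (f succ_elem 0) (psnd (psnd w)))"
      by (intro computable_app_code computable_psnd computable_id)
    show "num e = prec (\<lambda>u x. z) (\<lambda>u w. app_code (decode s) (f succ_elem 0) (psnd (psnd w))) u 0 e"
      for u e by (induction e) (simp_all add: num_def)
  qed
  then have "computable (\<lambda>u e. app_code (decode c) (f (jump_elem X) 0) (num e))"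
    by (rule computable_app_code)
  moreover have "eval ?Y (decode (app_code (decode c) (f (jump_elem X) 0) (num e))) x
      (f (B_app (jump_elem X) (const_fn e)) x)" for e x
    using eval_app_code[OF c num embedding_B_K2_app[OF emb jump_elem_in_B_rel const_fn_in_B_rel]] .
  ultimately show ?thesis using that by blast
qed

lemma turing_le_by_uniform_indices:
  assumes "computable (\<lambda>u e. k e)"
    and "\<And>e x. eval (total_oracle (char_fun Y)) (decode (k e)) x (F e x)"
    and "\<And>e. F e p = v \<longleftrightarrow> e \<in> A"
  shows "turing_le A Y"
proof -
  let ?Y = "total_oracle (char_fun Y)"
  define test where "test = prog_of (\<lambda>u y. if y = v then 1 else 0)"
  define decide where
    "decide = RComp test (RComp universal (RPair (prog_of (\<lambda>u e. k e)) (const_prog p)))"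
  have "eval ?Y (RPair (prog_of (\<lambda>u e. k e)) (const_prog p)) e (pair (k e) p)" for e
    by (intro eval.ev_pair eval_prog_of[OF assms(1)] eval_const_prog)
  moreover have "eval ?Y universal (pair (k e) p) (F e p)" for e
    unfolding eval_universal_iff by (rule assms(2))
  moreover have "eval ?Y test y (if y = v then 1 else 0)" for y
    unfolding test_def by (intro eval_prog_of computable_intros)
  ultimately have "eval ?Y decide e (if e \<in> A then 1 else 0)" for e
    unfolding decide_def assms(3)[symmetric] by (blast intro: eval.ev_comp)
  then have "Phi (chi Y) (encode decide) = chi A"
    unfolding chi_eq_total_oracle by (auto simp: chi_def char_fun_def intro!: Phi_encode_total)
  then show ?thesis unfolding turing_le_def by metis
qed

theorem corollary6p15:
  fixes X Y :: "nat set"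
  assumes "\<exists>f. embedding_B_K2 X Y f"
  shows "turing_le (jump X) Y"
proof -
  obtain f where emb: "embedding_B_K2 X Y f" using assms by blast
  obtain k where "computable (\<lambda>u e. k e)"
    and k: "\<And>e x. eval (total_oracle (char_fun Y)) (decode (k e)) x (f (B_app (jump_elem X) (const_fn e)) x)"
    using embedding_B_K2_jump_indices[OF emb] by blast
  have "const_fn 0 \<noteq> (\<lambda>x. None)" by (simp add: const_fn_def fun_eq_iff)
  then have "f (const_fn 0) \<noteq> f (\<lambda>x. None)"
    using emb const_fn_in_B_rel empty_fn_in_B_rel unfolding embedding_B_K2_def inj_on_def by metis
  then obtain p where p: "f (const_fn 0) p \<noteq> f (\<lambda>x. None) p" by blast
  have "f (B_app (jump_elem X) (const_fn e)) p = f (const_fn 0) p \<longleftrightarrow> e \<in> jump X" for e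
    using p by (simp add: B_app_jump_elem)
  with \<open>computable (\<lambda>u e. k e)\<close> k show ?thesis by (rule turing_le_by_uniform_indices)
qed

end
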